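(* Let $N\ge K\ge1$, $C>0$, $\epsilon_p,\epsilon_l>0$, and let $\bm U=(U_1,\dots,U_N)$ be a vector of positive feature importances (fixed independently of the input). Consider the R$^3$eLU-forward procedure with dynamic privacy budget allocation: compute $\hat{\bm v}=ClipK(\bm v,C,K,N)$; set $p_i=\frac12+\frac{U_i}{\|\bm U\|_\infty}\big(\frac{e^{\epsilon_p/K}}{1+e^{\epsilon_p/K}}-\frac12\big)$; independently draw $s_i\sim\mathrm{Bernoulli}(p_i)$ and Laplace noise $L_i$ for coordinate $i$ calibrated to the allocated budget $\epsilon_l U_i/\sum_{j=1}^N U_j$ (i.e. $L_i\sim\mathrm{Lap}\big(0,\,2KC\sum_{j}U_j/(\epsilon_l U_i)\big)$); output $\tilde a_i=\max(\hat v_i+L_i,0)$ if $s_i=1$ and $\tilde a_i=0$ otherwise. Then this procedure is still $\epsilon$-differentially private with $\epsilon=\epsilon_p+\epsilon_l$.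
   Context: $ClipK(\bm{v},C,K,N)$: given $\bm{v}\in\mathbb{R}^N$, keep the $K$ largest entries of $\bm{v}$ and set all other entries to $0$; then clip each kept entry into the interval $[0,C]$. $\mathrm{Lap}(0,b)$ is the Laplace distribution with mean $0$ and scale $b$. A randomized mechanism $\mathcal{M}$ is $\epsilon$-DP if for any two inputs $x,x'$ and every measurable output set $S$, $\Pr[\mathcal{M}(x)\in S]\le e^{\epsilon}\Pr[\mathcal{M}(x')\in S]$. *)

theory Defs
  imports "HOL-Probability.Probability"
begin

text \<open>Inputs and outputs in R^N are functions nat => real; only indices i < N matter.\<close>

definition topK :: "(nat \<Rightarrow> real) \<Rightarrow> nat \<Rightarrow> nat \<Rightarrow> nat set" where
  "topK v K N = {i. i < N \<and> card {j. j < N \<and> (v j > v i \<or> (v j = v i \<and> j < i))} < K}"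

definition ClipK :: "(nat \<Rightarrow> real) \<Rightarrow> real \<Rightarrow> nat \<Rightarrow> nat \<Rightarrow> (nat \<Rightarrow> real)" where
  "ClipK v C K N = (\<lambda>i. if i \<in> topK v K N then min (max (v i) 0) C else 0)"

definition laplace_density :: "real \<Rightarrow> real \<Rightarrow> real" where
  "laplace_density b x = exp (- \<bar>x\<bar> / b) / (2 * b)"

definition Lap :: "real \<Rightarrow> real measure" where
  "Lap b = density lborel (\<lambda>x. ennreal (laplace_density b x))"

definition sup_norm :: "(nat \<Rightarrow> real) \<Rightarrow> nat \<Rightarrow> real" where
  "sup_norm U N = Max ((\<lambda>i. \<bar>U i\<bar>) ` {..<N})"

definition sel_prob :: "(nat \<Rightarrow> real) \<Rightarrow> nat \<Rightarrow> nat \<Rightarrow> real \<Rightarrow> nat \<Rightarrow> real" where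
  "sel_prob U N K eps_p i =
     1/2 + U i / sup_norm U N * (exp (eps_p / K) / (1 + exp (eps_p / K)) - 1/2)"

definition lap_scale :: "(nat \<Rightarrow> real) \<Rightarrow> nat \<Rightarrow> nat \<Rightarrow> real \<Rightarrow> real \<Rightarrow> nat \<Rightarrow> real" where
  "lap_scale U N K C eps_l i = 2 * K * C * (\<Sum>j<N. U j) / (eps_l * U i)"

definition coord_out ::
  "(nat \<Rightarrow> real) \<Rightarrow> nat \<Rightarrow> nat \<Rightarrow> real \<Rightarrow> real \<Rightarrow> real \<Rightarrow> (nat \<Rightarrow> real) \<Rightarrow> nat \<Rightarrow> real measure" where
  "coord_out U N K C eps_p eps_l v i =
     measure_pmf (bernoulli_pmf (sel_prob U N K eps_p i)) \<bind>
       (\<lambda>s. if s then distr (Lap (lap_scale U N K C eps_l i)) borel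
                         (\<lambda>l. max (ClipK v C K N i + l) 0)
            else return borel 0)"

definition R3eLU_forward ::
  "(nat \<Rightarrow> real) \<Rightarrow> nat \<Rightarrow> nat \<Rightarrow> real \<Rightarrow> real \<Rightarrow> real \<Rightarrow> (nat \<Rightarrow> real) \<Rightarrow> (nat \<Rightarrow> real) measure" where
  "R3eLU_forward U N K C eps_p eps_l v = PiM {..<N} (coord_out U N K C eps_p eps_l v)"

definition output_space :: "nat \<Rightarrow> (nat \<Rightarrow> real) measure" where
  "output_space N = PiM {..<N} (\<lambda>_. borel)"

definition differentially_private ::
  "real \<Rightarrow> ('x \<Rightarrow> 'y measure) \<Rightarrow> 'y measure \<Rightarrow> bool" where
  "differentially_private eps M Y \<longleftrightarrow>
     (\<forall>x x' S. S \<in> sets Y \<longrightarrow> emeasure (M x) S \<le> ennreal (exp eps) * emeasure (M x') S)"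

end

theory Submission imports Defs begin

text \<open>Each coordinate is handled separately. The Bernoulli selection does not depend on the
  input at all, so it costs no privacy. Given selection, the output is a post-processing
  (clamping at 0) of a Laplace perturbation of \<open>ClipK v C K N i \<in> [0, C]\<close>; shifting the centre
  of a Laplace density of scale \<open>b\<^sub>i\<close> by at most \<open>C\<close> changes it pointwise by a factor of at
  most \<open>exp (C / b\<^sub>i)\<close>. The coordinates are independent, so these factors multiply, and with
  the budget allocation \<open>\<Sum>\<^sub>i C / b\<^sub>i = \<epsilon>\<^sub>l / (2K) \<le> \<epsilon>\<^sub>p + \<epsilon>\<^sub>l\<close>. The bound holds for any two
  inputs, not only neighbouring ones.\<close>

lemma laplace_density_nonneg: "b > 0 \<Longrightarrow> 0 \<le> laplace_density b x"
  by (simp add: laplace_density_def)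

lemma laplace_density_shift_le:
  assumes "b > 0"
  shows "laplace_density b (y - a) \<le> exp (\<bar>a - a'\<bar> / b) * laplace_density b (y - a')"
proof -
  have "- \<bar>y - a\<bar> / b \<le> \<bar>a - a'\<bar> / b + - \<bar>y - a'\<bar> / b"
    using assms by (simp add: divide_simps)
  then have "exp (- \<bar>y - a\<bar> / b) \<le> exp (\<bar>a - a'\<bar> / b) * exp (- \<bar>y - a'\<bar> / b)"
    by (simp add: exp_add[symmetric])
  then show ?thesis
    using assms unfolding laplace_density_def by (simp add: divide_simps)
qed

lemma nn_integral_laplace_density_nonneg_half:
  assumes "b > 0"
  shows "(\<integral>\<^sup>+x. ennreal (laplace_density b x) * indicator {0..} x \<partial>lborel) = 1 / 2"
proof -
  interpret prob_space "density lborel (exponential_density (1 / b))"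
    using assms by (intro prob_space_exponential_density) simp
  have half: "ennreal (z / 2) = ennreal z / 2" if "z \<ge> 0" for z :: real
    using divide_ennreal[of z 2] that by simp
  have "ennreal (laplace_density b x) * indicator {0..} x
      = ennreal (exponential_density (1 / b) x) / 2" for x
    using assms by (auto simp: laplace_density_def exponential_density_def indicator_def
        half[symmetric] field_simps)
  moreover have "(\<integral>\<^sup>+x. ennreal (exponential_density (1 / b) x) \<partial>lborel) = 1"
    using emeasure_space_1 by (simp add: emeasure_density)
  ultimately show ?thesis
    by (simp add: nn_integral_divide)
qed

lemma subprob_space_Lap:
  assumes b: "b > 0"
  shows "subprob_space (Lap b)"
proof
  show "space (Lap b) \<noteq> {}" by (simp add: Lap_def)
  let ?f = "\<lambda>x. ennreal (laplace_density b x)"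
  note pos_half = nn_integral_laplace_density_nonneg_half[OF b]
  have neg_half: "(\<integral>\<^sup>+x. ?f x * indicator {..<0} x \<partial>lborel) \<le> 1 / 2"
  proof -
    have "(\<integral>\<^sup>+x. ?f x * indicator {..<0} x \<partial>lborel)
        = (\<integral>\<^sup>+x. ?f x * indicator {..<0} x \<partial>distr lborel borel uminus)"
      by (simp add: lborel_distr_uminus)
    also have "\<dots> = (\<integral>\<^sup>+x. ?f (- x) * indicator {..<0} (- x) \<partial>lborel)"
      by (subst nn_integral_distr) (auto simp: laplace_density_def)
    also have "\<dots> \<le> (\<integral>\<^sup>+x. ?f x * indicator {0..} x \<partial>lborel)"
      by (intro nn_integral_mono) (auto simp: laplace_density_def indicator_def)
    finally show ?thesis using pos_half by simp
  qed
  have "emeasure (Lap b) (space (Lap b)) = (\<integral>\<^sup>+x. ?f x \<partial>lborel)"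
    unfolding Lap_def by (subst emeasure_density) (auto simp: laplace_density_def)
  also have "\<dots> = (\<integral>\<^sup>+x. ?f x * indicator {0..} x + ?f x * indicator {..<0} x \<partial>lborel)"
    by (intro nn_integral_cong) (auto simp: indicator_def)
  also have "\<dots> = (\<integral>\<^sup>+x. ?f x * indicator {0..} x \<partial>lborel)
                  + (\<integral>\<^sup>+x. ?f x * indicator {..<0} x \<partial>lborel)"
    by (subst nn_integral_add) (auto simp: laplace_density_def)
  also have "\<dots> \<le> 1 / 2 + 1 / 2"
    using pos_half neg_half by (simp add: add_left_mono)
  also have "(1 :: ennreal) / 2 + 1 / 2 = 1"
    using ennreal_plus[of "1 / 2" "1 / 2"] divide_ennreal[of 1 2] by simp
  finally show "emeasure (Lap b) (space (Lap b)) \<le> 1" .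
qed

lemma nn_integral_distr_Lap_max:
  assumes "b > 0" and [measurable]: "g \<in> borel_measurable borel"
  shows "(\<integral>\<^sup>+x. g x \<partial>distr (Lap b) borel (\<lambda>l. max (a + l) 0))
       = (\<integral>\<^sup>+y. ennreal (laplace_density b (y - a)) * g (max y 0) \<partial>lborel)"
proof -
  have "(\<integral>\<^sup>+x. g x \<partial>distr (Lap b) borel (\<lambda>l. max (a + l) 0))
      = (\<integral>\<^sup>+l. ennreal (laplace_density b ((a + l) - a)) * g (max (a + l) 0) \<partial>lborel)"
    unfolding Lap_def by (simp add: nn_integral_distr nn_integral_density laplace_density_def)
  also have "\<dots> = (\<integral>\<^sup>+y. ennreal (laplace_density b (y - a)) * g (max y 0)
                     \<partial>distr lborel borel ((+) a))"
    by (subst nn_integral_distr) (auto simp: laplace_density_def)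
  finally show ?thesis by (simp add: lborel_distr_plus)
qed

lemma nn_integral_distr_Lap_max_le:
  assumes b: "b > 0" and g[measurable]: "g \<in> borel_measurable borel"
  shows "(\<integral>\<^sup>+x. g x \<partial>distr (Lap b) borel (\<lambda>l. max (a + l) 0))
     \<le> ennreal (exp (\<bar>a - a'\<bar> / b)) * (\<integral>\<^sup>+x. g x \<partial>distr (Lap b) borel (\<lambda>l. max (a' + l) 0))"
proof -
  let ?c = "ennreal (exp (\<bar>a - a'\<bar> / b))"
  have "ennreal (laplace_density b (y - a)) * g (max y 0)
      \<le> ?c * (ennreal (laplace_density b (y - a')) * g (max y 0))" for y
  proof -
    have "ennreal (laplace_density b (y - a)) \<le> ?c * ennreal (laplace_density b (y - a'))"
      using laplace_density_shift_le[OF b, of y a a'] laplace_density_nonneg[OF b]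
      by (simp add: ennreal_mult'[symmetric] ennreal_leI)
    then show ?thesis
      by (metis mult.assoc mult_right_mono zero_le)
  qed
  then have "(\<integral>\<^sup>+y. ennreal (laplace_density b (y - a)) * g (max y 0) \<partial>lborel)
      \<le> ?c * (\<integral>\<^sup>+y. ennreal (laplace_density b (y - a')) * g (max y 0) \<partial>lborel)"
    by (subst nn_integral_cmult[symmetric]) (auto simp: laplace_density_def intro: nn_integral_mono)
  then show ?thesis
    by (simp add: nn_integral_distr_Lap_max[OF b g])
qed

lemma nn_integral_bind_pmf_le:
  fixes p :: "'a pmf" and K K' :: "'a \<Rightarrow> 'b measure"
  assumes K: "\<And>s. K s \<in> space (subprob_algebra M)"
    and K': "\<And>s. K' s \<in> space (subprob_algebra M)"
    and g: "g \<in> borel_measurable M"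
    and le: "\<And>s. (\<integral>\<^sup>+x. g x \<partial>K s) \<le> c * (\<integral>\<^sup>+x. g x \<partial>K' s)"
  shows "(\<integral>\<^sup>+x. g x \<partial>(measure_pmf p \<bind> K)) \<le> c * (\<integral>\<^sup>+x. g x \<partial>(measure_pmf p \<bind> K'))"
proof -
  have "(\<integral>\<^sup>+x. g x \<partial>(measure_pmf p \<bind> K)) = (\<integral>\<^sup>+s. (\<integral>\<^sup>+x. g x \<partial>K s) \<partial>measure_pmf p)"
    by (rule nn_integral_bind[OF g]) (use K in auto)
  also have "\<dots> \<le> (\<integral>\<^sup>+s. c * (\<integral>\<^sup>+x. g x \<partial>K' s) \<partial>measure_pmf p)"
    by (intro nn_integral_mono le)
  also have "\<dots> = c * (\<integral>\<^sup>+s. (\<integral>\<^sup>+x. g x \<partial>K' s) \<partial>measure_pmf p)"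
    by (subst nn_integral_cmult) auto
  also have "(\<integral>\<^sup>+s. (\<integral>\<^sup>+x. g x \<partial>K' s) \<partial>measure_pmf p) = (\<integral>\<^sup>+x. g x \<partial>(measure_pmf p \<bind> K'))"
    by (rule nn_integral_bind[OF g, symmetric]) (use K' in auto)
  finally show ?thesis .
qed

lemma product_sigma_finite_subprob_algebra:
  assumes "\<And>i. M i \<in> space (subprob_algebra N)"
  shows "product_sigma_finite M"
  unfolding product_sigma_finite_def
proof
  fix i
  interpret subprob_space "M i"
    using assms by (simp add: space_subprob_algebra)
  show "sigma_finite_measure (M i)" ..
qed

lemma nn_integral_PiM_le_prod:
  fixes M M' :: "'i \<Rightarrow> 'a measure" and c :: "'i \<Rightarrow> ennreal"
  assumes "finite I"
    and "product_sigma_finite M" and "product_sigma_finite M'"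
    and sets_eq: "\<And>i. sets (M i) = sets (M' i)"
    and "\<And>i g. i \<in> I \<Longrightarrow> g \<in> borel_measurable (M i) \<Longrightarrow>
                 (\<integral>\<^sup>+x. g x \<partial>M i) \<le> c i * (\<integral>\<^sup>+x. g x \<partial>M' i)"
    and "f \<in> borel_measurable (PiM I M)"
  shows "(\<integral>\<^sup>+x. f x \<partial>PiM I M) \<le> (\<Prod>i\<in>I. c i) * (\<integral>\<^sup>+x. f x \<partial>PiM I M')"
  using assms(1,5,6)
proof (induction I arbitrary: f rule: finite_induct)
  case empty
  then show ?case by (simp add: PiM_empty)
next
  case (insert i I)
  interpret P: product_sigma_finite M by fact
  interpret P': product_sigma_finite M' by fact
  interpret sigma_finite_measure "PiM I M'"
    using insert.hyps by (simp add: P'.sigma_finite)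
  let ?F = "\<lambda>y. \<integral>\<^sup>+x. f (x(i := y)) \<partial>PiM I M'"
  have [measurable]: "f \<in> borel_measurable (PiM (insert i I) M)" by fact
  have "sets (PiM (insert i I) M) = sets (PiM (insert i I) M')"
    by (rule sets_PiM_cong) (auto simp: sets_eq)
  then have [measurable]: "f \<in> borel_measurable (PiM (insert i I) M')"
    using insert.prems(2) measurable_cong_sets by blast
  have F': "?F \<in> borel_measurable (M' i)"
    by measurable
  then have F: "?F \<in> borel_measurable (M i)"
    using measurable_cong_sets[OF sets_eq refl] by blast
  have "(\<integral>\<^sup>+x. f x \<partial>PiM (insert i I) M) = (\<integral>\<^sup>+y. (\<integral>\<^sup>+x. f (x(i := y)) \<partial>PiM I M) \<partial>M i)"
    by (rule P.product_nn_integral_insert_rev) (use insert in auto)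
  also have "\<dots> \<le> (\<integral>\<^sup>+y. (\<Prod>j\<in>I. c j) * ?F y \<partial>M i)"
  proof (rule nn_integral_mono)
    fix y assume "y \<in> space (M i)"
    then have "(\<lambda>x. f (x(i := y))) \<in> borel_measurable (PiM I M)"
      using insert.hyps by measurable
    then show "(\<integral>\<^sup>+x. f (x(i := y)) \<partial>PiM I M) \<le> (\<Prod>j\<in>I. c j) * ?F y"
      using insert.IH insert.prems by auto
  qed
  also have "\<dots> \<le> c i * (\<integral>\<^sup>+y. (\<Prod>j\<in>I. c j) * ?F y \<partial>M' i)"
    by (rule insert.prems) (use F in auto)
  also have "\<dots> = c i * (\<Prod>j\<in>I. c j) * (\<integral>\<^sup>+y. ?F y \<partial>M' i)"
    by (subst nn_integral_cmult) (use F' in \<open>auto simp: mult.assoc\<close>)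
  also have "(\<integral>\<^sup>+y. ?F y \<partial>M' i) = (\<integral>\<^sup>+x. f x \<partial>PiM (insert i I) M')"
    by (rule P'.product_nn_integral_insert_rev[symmetric]) (use insert in auto)
  finally show ?case
    using insert.hyps by (simp add: mult.assoc)
qed

lemma differentially_private_PiM:
  fixes M :: "'x \<Rightarrow> 'i \<Rightarrow> 'a measure" and c :: "'i \<Rightarrow> ennreal"
  assumes "finite I"
    and "\<And>x. product_sigma_finite (M x)"
    and sets_eq: "\<And>x i. sets (M x i) = sets (Y i)"
    and coord: "\<And>x x' i g. i \<in> I \<Longrightarrow> g \<in> borel_measurable (Y i) \<Longrightarrow>
                 (\<integral>\<^sup>+y. g y \<partial>M x i) \<le> c i * (\<integral>\<^sup>+y. g y \<partial>M x' i)"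
    and budget: "(\<Prod>i\<in>I. c i) \<le> ennreal (exp eps)"
  shows "differentially_private eps (\<lambda>x. PiM I (M x)) (PiM I Y)"
  unfolding differentially_private_def
proof (intro allI impI)
  fix x x' S
  assume "S \<in> sets (PiM I Y)"
  then have S: "S \<in> sets (PiM I (M u))" for u
    by (simp add: sets_PiM_cong[OF refl sets_eq])
  have "emeasure (PiM I (M x)) S = (\<integral>\<^sup>+y. indicator S y \<partial>PiM I (M x))"
    using S by simp
  also have "\<dots> \<le> (\<Prod>i\<in>I. c i) * (\<integral>\<^sup>+y. indicator S y \<partial>PiM I (M x'))"
  proof (rule nn_integral_PiM_le_prod)
    fix i and g :: "'a \<Rightarrow> ennreal"
    assume "i \<in> I" and "g \<in> borel_measurable (M x i)"
    then show "(\<integral>\<^sup>+y. g y \<partial>M x i) \<le> c i * (\<integral>\<^sup>+y. g y \<partial>M x' i)"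
      using coord measurable_cong_sets[OF sets_eq refl] by blast
  qed (use assms S in auto)
  also have "\<dots> \<le> ennreal (exp eps) * emeasure (PiM I (M x')) S"
    using S by (simp add: mult_right_mono[OF budget])
  finally show "emeasure (PiM I (M x)) S \<le> ennreal (exp eps) * emeasure (PiM I (M x')) S" .
qed

lemma abs_ClipK_diff_le: "0 \<le> C \<Longrightarrow> \<bar>ClipK v C K N i - ClipK w C K N i\<bar> \<le> C"
  unfolding ClipK_def by auto

definition noisy_relu_kernel :: "real \<Rightarrow> real \<Rightarrow> bool \<Rightarrow> real measure" where
  "noisy_relu_kernel b a s = (if s then distr (Lap b) borel (\<lambda>l. max (a + l) 0) else return borel 0)"

lemma coord_out_eq_bind:
  "coord_out U N K C eps_p eps_l v i =
     measure_pmf (bernoulli_pmf (sel_prob U N K eps_p i)) \<bind>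
       noisy_relu_kernel (lap_scale U N K C eps_l i) (ClipK v C K N i)"
  unfolding coord_out_def noisy_relu_kernel_def ..

lemma noisy_relu_kernel_in_subprob_algebra:
  assumes "b > 0"
  shows "noisy_relu_kernel b a s \<in> space (subprob_algebra borel)"
proof (cases s)
  case True
  interpret subprob_space "Lap b"
    using subprob_space_Lap[OF assms] .
  have "subprob_space (distr (Lap b) borel (\<lambda>l. max (a + l) 0))"
    by (rule subprob_space_distr) (auto simp: Lap_def)
  then show ?thesis
    using True by (simp add: noisy_relu_kernel_def space_subprob_algebra)
qed (simp add: noisy_relu_kernel_def space_subprob_algebra subprob_space_return)

lemma nn_integral_noisy_relu_kernel_le:
  assumes b: "b > 0" and g: "g \<in> borel_measurable borel"
  shows "(\<integral>\<^sup>+x. g x \<partial>noisy_relu_kernel b a s)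
       \<le> ennreal (exp (\<bar>a - a'\<bar> / b)) * (\<integral>\<^sup>+x. g x \<partial>noisy_relu_kernel b a' s)"
proof (cases s)
  case False
  have "g 0 \<le> ennreal (exp (\<bar>a - a'\<bar> / b)) * g 0"
    using mult_right_mono[of 1 "ennreal (exp (\<bar>a - a'\<bar> / b))" "g 0"] b by simp
  then show ?thesis
    using False g by (simp add: noisy_relu_kernel_def nn_integral_return)
qed (simp add: noisy_relu_kernel_def nn_integral_distr_Lap_max_le[OF b g])

lemma coord_out_in_subprob_algebra:
  assumes "lap_scale U N K C eps_l i > 0"
  shows "coord_out U N K C eps_p eps_l v i \<in> space (subprob_algebra borel)"
proof -
  note kernel = noisy_relu_kernel_in_subprob_algebra[OF assms]
  have "subprob_space (coord_out U N K C eps_p eps_l v i)"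
    unfolding coord_out_eq_bind
    by (rule subprob_space_bind) (use kernel in \<open>auto simp: subprob_space_measure_pmf\<close>)
  moreover have "sets (coord_out U N K C eps_p eps_l v i) = sets borel"
    unfolding coord_out_eq_bind
    by (rule sets_bind) (use kernel in \<open>auto simp: space_subprob_algebra\<close>)
  ultimately show ?thesis
    by (simp add: space_subprob_algebra)
qed

lemma nn_integral_coord_out_le:
  assumes b: "lap_scale U N K C eps_l i > 0" and "0 \<le> C" and g: "g \<in> borel_measurable borel"
  shows "(\<integral>\<^sup>+x. g x \<partial>coord_out U N K C eps_p eps_l v i)
       \<le> ennreal (exp (C / lap_scale U N K C eps_l i)) * (\<integral>\<^sup>+x. g x \<partial>coord_out U N K C eps_p eps_l w i)"
  unfolding coord_out_eq_bind
proof (rule nn_integral_bind_pmf_le[OF noisy_relu_kernel_in_subprob_algebra[OF b]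
      noisy_relu_kernel_in_subprob_algebra[OF b] g])
  fix s
  let ?b = "lap_scale U N K C eps_l i"
  have "exp (\<bar>ClipK v C K N i - ClipK w C K N i\<bar> / ?b) \<le> exp (C / ?b)"
    using abs_ClipK_diff_le[OF \<open>0 \<le> C\<close>] b by (simp add: divide_right_mono)
  then show "(\<integral>\<^sup>+x. g x \<partial>noisy_relu_kernel ?b (ClipK v C K N i) s)
      \<le> ennreal (exp (C / ?b)) * (\<integral>\<^sup>+x. g x \<partial>noisy_relu_kernel ?b (ClipK w C K N i) s)"
    by (intro order_trans[OF nn_integral_noisy_relu_kernel_le[OF b g, where a' = "ClipK w C K N i"]]
        mult_right_mono ennreal_leI) auto
qed

lemma lap_scale_pos:
  assumes "1 \<le> K" and "C > 0" and "eps_l > 0" and "\<And>j. j < N \<Longrightarrow> U j > 0" and "i < N"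
  shows "lap_scale U N K C eps_l i > 0"
proof -
  have "(\<Sum>j<N. U j) > 0"
    using assms(4,5) by (intro sum_pos) auto
  then show ?thesis
    using assms unfolding lap_scale_def by (intro divide_pos_pos mult_pos_pos) auto
qed

lemma sum_div_lap_scale:
  assumes "1 \<le> K" and "C > 0" and "\<And>j. j < N \<Longrightarrow> U j > 0" and "0 < N"
  shows "(\<Sum>i<N. C / lap_scale U N K C eps_l i) = eps_l / (2 * K)"
proof -
  define SU where "SU = (\<Sum>j<N. U j)"
  have SU: "SU > 0"
    unfolding SU_def using assms(3,4) by (intro sum_pos) auto
  have "(\<Sum>i<N. C / lap_scale U N K C eps_l i) = (\<Sum>i<N. eps_l / (2 * K * SU) * U i)"
    using assms(1-3) SU by (intro sum.cong) (auto simp: lap_scale_def SU_def[symmetric] field_simps)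
  also have "\<dots> = eps_l / (2 * K * SU) * SU"
    unfolding SU_def by (rule sum_distrib_left[symmetric])
  finally show ?thesis
    using SU by simp
qed

theorem corollary6:
  fixes N K :: nat and C eps_p eps_l :: real and U :: "nat \<Rightarrow> real"
  assumes "1 \<le> K" and "K \<le> N" and "C > 0" and "eps_p > 0" and "eps_l > 0"
    and "\<And>i. i < N \<Longrightarrow> U i > 0"
  shows "differentially_private (eps_p + eps_l)
           (R3eLU_forward U N K C eps_p eps_l) (output_space N)"
proof -
  let ?b = "lap_scale U N K C eps_l"
  note b_pos = lap_scale_pos[OF assms(1,3,5,6)]
  \<comment> \<open>Padding outside \<open>{..<N}\<close>, where \<open>?b\<close> need not be positive, makes the family sigma-finite.\<close>
  define M where "M v i = (if i < N then coord_out U N K C eps_p eps_l v i else return borel 0)"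
    for v i
  have M_space: "M v i \<in> space (subprob_algebra borel)" for v i
    using coord_out_in_subprob_algebra[OF b_pos]
    by (simp add: M_def space_subprob_algebra subprob_space_return)
  then have M_sets: "sets (M v i) = sets borel" for v i
    by (simp add: space_subprob_algebra)
  have "eps_l / (2 * K) \<le> eps_p + eps_l"
    using assms(1,4,5) divide_left_mono[of 1 "2 * real K" eps_l] by simp
  then have budget: "(\<Prod>i<N. ennreal (exp (C / ?b i))) \<le> ennreal (exp (eps_p + eps_l))"
    using sum_div_lap_scale[of K C N U eps_l] assms
    by (simp add: prod_ennreal exp_sum[symmetric] ennreal_leI)
  have "differentially_private (eps_p + eps_l) (\<lambda>v. PiM {..<N} (M v)) (output_space N)"
    unfolding output_space_def
  proof (rule differentially_private_PiM[OF _ product_sigma_finite_subprob_algebra[OF M_space]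
        M_sets _ budget])
    fix v w i and g :: "real \<Rightarrow> ennreal"
    assume "i \<in> {..<N}" and "g \<in> borel_measurable borel"
    then show "(\<integral>\<^sup>+y. g y \<partial>M v i) \<le> ennreal (exp (C / ?b i)) * (\<integral>\<^sup>+y. g y \<partial>M w i)"
      using b_pos assms(3) by (simp add: M_def nn_integral_coord_out_le)
  qed simp
  moreover have "R3eLU_forward U N K C eps_p eps_l = (\<lambda>v. PiM {..<N} (M v))"
    unfolding R3eLU_forward_def by (intro ext PiM_cong) (auto simp: M_def)
  ultimately show ?thesis
    by simp
qed

end
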